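(* (a) Let $G$ be a uniformly random ADMG on vertex set $\{1,\dots,n\}$. Then there is a constant $c>0$ such that for all sufficiently large $n$, $\mathbb{E}[|\mathrm{MEC}(G)|] \ge 2^{c n^2}$. (b) Let $H$ be a uniformly random DCG on vertex set $\{1,\dots,n\}$. Then there is a constant $c>0$ such that for all sufficiently large $n$, $\mathbb{E}[|\mathrm{MEC}(H)|] \ge 2^{c n}$.
   Context: An acyclic directed mixed graph (ADMG) on vertex set $V$ consists of a set of directed edges (ordered pairs $(v,w)$, $v\neq w$, written $v\to w$) containing no directed cycle, together with a set of bidirected edges (unordered pairs $\{v,w\}$, $v\ne w$, written $v\leftrightarrow w$). A uniformly random ADMG is uniform over all ADMGs on $V$; equivalently, a uniformly random DAG together with each bidirected edge included independently with probability $1/2$. A directed cyclic graph (DCG) on $V$ is any directed graph without self-loops (both $v\to w$ and $w\to v$ may be present; directed cycles allowed); a uniformly random DCG includes each of the $n(n-1)$ possible directed edges independently with probability $1/2$. Paths and d-separation: a path from $a$ to $b$ is a sequence $v_1,e_1,\dots,e_{k-1},v_k$ with $v_1=a\neq b=v_k$ (vertices may repeat), each $e_j$ an edge (directed in either direction, or bidirected) between $v_j$ and $v_{j+1}$. An internal vertex $v_j$ is a collider if both $e_{j-1}$ and $e_j$ have an arrowhead at $v_j$ (directed into $v_j$ or bidirected). $x$ is a descendant of $v$ if $x=v$ or there is a directed path from $v$ to $x$. A path is active given $Z\subseteq V\setminus\{a,b\}$ if every internal non-collider is not in $Z$ and every collider is in $Z$ or has a descendant in $Z$; $a,b$ are d-connected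 given $Z$ if an active path exists, else d-separated. Two graphs on the same vertex set are Markov equivalent if they have the same d-separation statements. $\mathrm{MEC}(G)$ is the set of graphs of the same model class (ADMGs in (a), DCGs in (b)) on the same vertex set that are Markov equivalent to $G$. *)

theory Defs
  imports Main "HOL-Library.Transitive_Closure_Table" Complex_Main
begin

text \<open>A mixed graph is a pair (D, B): D the set of directed edges (v,w) meaning v -> w,
  B the bidirected edges, encoded as a symmetric irreflexive relation.
  Vertex set is {1..n}.\<close>

type_synonym mgraph = "(nat \<times> nat) set \<times> (nat \<times> nat) set"

definition verts :: "nat \<Rightarrow> nat set" where
  "verts n = {1..n}"

definition is_admg :: "nat \<Rightarrow> mgraph \<Rightarrow> bool" where
  "is_admg n G \<longleftrightarrow>
     fst G \<subseteq> verts n \<times> verts n \<and> (\<forall>v. (v, v) \<notin> fst G) \<and> acyclic (fst G) \<and>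
     snd G \<subseteq> verts n \<times> verts n \<and> (\<forall>v. (v, v) \<notin> snd G) \<and> sym (snd G)"

definition is_dcg :: "nat \<Rightarrow> mgraph \<Rightarrow> bool" where
  "is_dcg n G \<longleftrightarrow>
     fst G \<subseteq> verts n \<times> verts n \<and> (\<forall>v. (v, v) \<notin> fst G) \<and> snd G = {}"

definition admgs :: "nat \<Rightarrow> mgraph set" where
  "admgs n = {G. is_admg n G}"

definition dcgs :: "nat \<Rightarrow> mgraph set" where
  "dcgs n = {G. is_dcg n G}"

text \<open>An edge traversed on a path from v_j to v_(j+1):
  Fwd = v_j -> v_(j+1), Bwd = v_j <- v_(j+1), Bid = v_j <-> v_(j+1).\<close>

datatype step = Fwd | Bwd | Bid

fun edge_ok :: "mgraph \<Rightarrow> nat \<Rightarrow> step \<Rightarrow> nat \<Rightarrow> bool" where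
  "edge_ok G v Fwd w \<longleftrightarrow> (v, w) \<in> fst G"
| "edge_ok G v Bwd w \<longleftrightarrow> (w, v) \<in> fst G"
| "edge_ok G v Bid w \<longleftrightarrow> (v, w) \<in> snd G"

text \<open>A path: vertex list vs (repetitions allowed) and edge list es, es!j between vs!j and vs!(j+1).\<close>

definition is_path :: "mgraph \<Rightarrow> nat \<Rightarrow> nat \<Rightarrow> nat list \<Rightarrow> step list \<Rightarrow> bool" where
  "is_path G a b vs es \<longleftrightarrow>
     vs \<noteq> [] \<and> hd vs = a \<and> last vs = b \<and> a \<noteq> b \<and> length es + 1 = length vs \<and>
     (\<forall>j < length es. edge_ok G (vs ! j) (es ! j) (vs ! Suc j))"

definition head_right :: "step \<Rightarrow> bool" where
  "head_right e \<longleftrightarrow> e = Fwd \<or> e = Bid"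

definition head_left :: "step \<Rightarrow> bool" where
  "head_left e \<longleftrightarrow> e = Bwd \<or> e = Bid"

text \<open>Internal vertex vs!j (0 < j < length vs - 1) is a collider.\<close>

definition collider :: "step list \<Rightarrow> nat \<Rightarrow> bool" where
  "collider es j \<longleftrightarrow> head_right (es ! (j - 1)) \<and> head_left (es ! j)"

definition descendant :: "mgraph \<Rightarrow> nat \<Rightarrow> nat \<Rightarrow> bool" where
  "descendant G v x \<longleftrightarrow> (v, x) \<in> (fst G)\<^sup>*"

definition active :: "mgraph \<Rightarrow> nat set \<Rightarrow> nat list \<Rightarrow> step list \<Rightarrow> bool" where
  "active G Z vs es \<longleftrightarrow>
     (\<forall>j. 0 < j \<and> j < length es \<longrightarrow>
        (if collider es j then (\<exists>z\<in>Z. descendant G (vs ! j) z) else vs ! j \<notin> Z))"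

definition d_connected :: "mgraph \<Rightarrow> nat \<Rightarrow> nat \<Rightarrow> nat set \<Rightarrow> bool" where
  "d_connected G a b Z \<longleftrightarrow> (\<exists>vs es. is_path G a b vs es \<and> active G Z vs es)"

definition d_separated :: "mgraph \<Rightarrow> nat \<Rightarrow> nat \<Rightarrow> nat set \<Rightarrow> bool" where
  "d_separated G a b Z \<longleftrightarrow> \<not> d_connected G a b Z"

definition markov_equiv :: "nat \<Rightarrow> mgraph \<Rightarrow> mgraph \<Rightarrow> bool" where
  "markov_equiv n G H \<longleftrightarrow>
     (\<forall>a \<in> verts n. \<forall>b \<in> verts n. \<forall>Z. a \<noteq> b \<and> Z \<subseteq> verts n - {a, b} \<longrightarrow>
        (d_separated G a b Z \<longleftrightarrow> d_separated H a b Z))"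

definition MEC :: "mgraph set \<Rightarrow> nat \<Rightarrow> mgraph \<Rightarrow> mgraph set" where
  "MEC C n G = {H \<in> C. markov_equiv n G H}"

definition expected_MEC_size :: "mgraph set \<Rightarrow> nat \<Rightarrow> real" where
  "expected_MEC_size C n = (\<Sum>G\<in>C. real (card (MEC C n G))) / real (card C)"

end

theory Submission
  imports Defs "HOL-Library.FuncSet"
begin

text \<open>
  If every two vertices of G are adjacent, then the one-edge path between any two vertices is
  active for every conditioning set, so G has no d-separations at all; hence all such complete
  graphs of a class C are Markov equivalent, and a family S of them gives
  E |MEC| \<ge> |S|^2 / |C| because each member of S has all of S in its class.  A graph is determined by the sets of edge types it has from i to j
  for the m = n(n-1)/2 pairs i < j.  An ADMG realises at most 6 of these 8 sets (acyclicity
  forbids i \<rightarrow> j together with j \<rightarrow> i), while the 3 nonempty subsets of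
  {i \<rightarrow> j, i \<leftrightarrow> j} always give acyclic complete ADMGs; so E |MEC| \<ge> (9/6)^m.
  For DCGs there are 4 sets of edge types per pair, 3 of them nonempty, so E |MEC| \<ge> (9/4)^m.
\<close>

lemma UNIV_step: "UNIV = {Fwd, Bwd, Bid}"
  using step.exhaust by auto

instance step :: finite
  by standard (simp add: UNIV_step)

fun flip_step :: "step \<Rightarrow> step" where
  "flip_step Fwd = Bwd"
| "flip_step Bwd = Fwd"
| "flip_step Bid = Bid"

lemma edge_ok_flip_step:
  assumes "sym (snd G)" and "edge_ok G a e b"
  shows "edge_ok G b (flip_step e) a"
  using assms by (cases e) (auto dest: symD)

lemma d_connected_if_edge_ok:
  assumes "edge_ok G a e b" and "a \<noteq> b"
  shows "d_connected G a b Z"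
  unfolding d_connected_def
proof (intro exI conjI)
  show "is_path G a b [a, b] [e]"
    using assms by (simp add: is_path_def)
  show "active G Z [a, b] [e]"
    by (simp add: active_def)
qed

definition pairs :: "nat \<Rightarrow> (nat \<times> nat) set" where
  "pairs n = {(i, j). 1 \<le> i \<and> i < j \<and> j \<le> n}"

lemma finite_pairs [simp]: "finite (pairs n)"
  by (rule finite_subset[of _ "{..n} \<times> {..n}"]) (auto simp: pairs_def)

lemma pair_in_pairs:
  assumes "a \<in> verts n" and "b \<in> verts n" and "a \<noteq> b"
  shows "(a, b) \<in> pairs n \<or> (b, a) \<in> pairs n"
  using assms by (auto simp: pairs_def verts_def)

definition mixed_graph :: "nat \<Rightarrow> mgraph \<Rightarrow> bool" where
  "mixed_graph n G \<longleftrightarrow>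
     fst G \<subseteq> verts n \<times> verts n - Id \<and> snd G \<subseteq> verts n \<times> verts n - Id \<and> sym (snd G)"

lemma is_admg_iff: "is_admg n G \<longleftrightarrow> mixed_graph n G \<and> acyclic (fst G)"
  by (auto simp: is_admg_def mixed_graph_def)

lemma is_dcg_iff: "is_dcg n G \<longleftrightarrow> mixed_graph n G \<and> snd G = {}"
  by (auto simp: is_dcg_def mixed_graph_def sym_def)

definition edge_types :: "mgraph \<Rightarrow> nat \<times> nat \<Rightarrow> step set" where
  "edge_types G p = {e. edge_ok G (fst p) e (snd p)}"

definition graph_of_edge_types :: "nat \<Rightarrow> (nat \<times> nat \<Rightarrow> step set) \<Rightarrow> mgraph" where
  "graph_of_edge_types n s =
     ({(i, j). (i, j) \<in> pairs n \<and> Fwd \<in> s (i, j)} \<union> {(j, i). (i, j) \<in> pairs n \<and> Bwd \<in> s (i, j)},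
      {(i, j). (i, j) \<in> pairs n \<and> Bid \<in> s (i, j)} \<union> {(j, i). (i, j) \<in> pairs n \<and> Bid \<in> s (i, j)})"

lemma mixed_graph_graph_of_edge_types: "mixed_graph n (graph_of_edge_types n s)"
  by (auto simp: mixed_graph_def graph_of_edge_types_def pairs_def verts_def sym_def)

lemma edge_types_graph_of_edge_types:
  assumes "p \<in> pairs n"
  shows "edge_types (graph_of_edge_types n s) p = s p"
proof (rule set_eqI)
  fix e
  show "e \<in> edge_types (graph_of_edge_types n s) p \<longleftrightarrow> e \<in> s p"
    using assms by (cases e) (auto simp: edge_types_def graph_of_edge_types_def pairs_def)
qed

lemma graph_of_edge_types_cong:
  assumes "\<And>p. p \<in> pairs n \<Longrightarrow> s p = t p"
  shows "graph_of_edge_types n s = graph_of_edge_types n t"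
  using assms by (auto simp: graph_of_edge_types_def)

lemma graph_of_edge_types_edge_types:
  assumes "mixed_graph n G"
  shows "graph_of_edge_types n (edge_types G) = G"
proof (rule prod_eqI)
  have G: "fst G \<subseteq> verts n \<times> verts n - Id" "snd G \<subseteq> verts n \<times> verts n - Id" "sym (snd G)"
    using assms by (auto simp: mixed_graph_def)
  have directed: "(a, b) \<in> pairs n \<or> (b, a) \<in> pairs n" if "(a, b) \<in> fst G" for a b
    using that G(1) by (intro pair_in_pairs) auto
  show "fst (graph_of_edge_types n (edge_types G)) = fst G"
    by (auto simp: graph_of_edge_types_def edge_types_def dest: directed)
  have bidirected: "(a, b) \<in> pairs n \<and> (a, b) \<in> snd G \<or> (b, a) \<in> pairs n \<and> (b, a) \<in> snd G"
    if "(a, b) \<in> snd G" for a b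
    using that G(2,3) pair_in_pairs[of a n b] by (auto dest: symD)
  show "snd (graph_of_edge_types n (edge_types G)) = snd G"
    by (auto simp: graph_of_edge_types_def edge_types_def dest: bidirected symD[OF G(3)])
qed

lemma inj_on_edge_types:
  "inj_on (\<lambda>G. restrict (edge_types G) (pairs n)) (Collect (mixed_graph n))"
proof (rule inj_onI)
  fix G H
  assume "G \<in> Collect (mixed_graph n)" "H \<in> Collect (mixed_graph n)"
    and eq: "restrict (edge_types G) (pairs n) = restrict (edge_types H) (pairs n)"
  have "edge_types G p = edge_types H p" if "p \<in> pairs n" for p
    using fun_cong[OF eq, of p] that by simp
  then have "graph_of_edge_types n (edge_types G) = graph_of_edge_types n (edge_types H)"
    by (rule graph_of_edge_types_cong)
  then show "G = H"
    using \<open>G \<in> _\<close> \<open>H \<in> _\<close> by (simp add: graph_of_edge_types_edge_types)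
qed

lemma inj_on_graph_of_edge_types: "inj_on (graph_of_edge_types n) (pairs n \<rightarrow>\<^sub>E L)"
proof (rule inj_onI)
  fix s t
  assume s: "s \<in> pairs n \<rightarrow>\<^sub>E L" and t: "t \<in> pairs n \<rightarrow>\<^sub>E L"
    and eq: "graph_of_edge_types n s = graph_of_edge_types n t"
  show "s = t"
  proof (rule PiE_ext[OF s t])
    fix p
    assume "p \<in> pairs n"
    then show "s p = t p"
      by (metis eq edge_types_graph_of_edge_types)
  qed
qed

lemma card_le_power_card_edge_types:
  assumes "C \<subseteq> Collect (mixed_graph n)" and "\<And>G p. G \<in> C \<Longrightarrow> p \<in> pairs n \<Longrightarrow> edge_types G p \<in> U"
  shows "finite C" and "card C \<le> card U ^ card (pairs n)"
proof -
  let ?code = "\<lambda>G. restrict (edge_types G) (pairs n)"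
  have inj: "inj_on ?code C"
    using inj_on_edge_types assms(1) by (rule inj_on_subset)
  have sub: "?code ` C \<subseteq> pairs n \<rightarrow>\<^sub>E U"
    using assms(2) by auto
  then show "finite C"
    using inj finite_subset[OF sub] by (simp add: finite_PiE finite_image_iff)
  have "card C = card (?code ` C)"
    using inj by (simp add: card_image)
  also have "\<dots> \<le> card (pairs n \<rightarrow>\<^sub>E U)"
    using sub by (rule card_mono[rotated]) (simp add: finite_PiE)
  also have "\<dots> = card U ^ card (pairs n)"
    by (simp add: card_PiE)
  finally show "card C \<le> card U ^ card (pairs n)" .
qed

definition complete_mgraph :: "nat \<Rightarrow> mgraph \<Rightarrow> bool" where
  "complete_mgraph n G \<longleftrightarrow> (\<forall>p \<in> pairs n. edge_types G p \<noteq> {})"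

lemma d_connected_if_complete_mgraph:
  assumes "mixed_graph n G" and "complete_mgraph n G"
    and "a \<in> verts n" and "b \<in> verts n" and "a \<noteq> b"
  shows "d_connected G a b Z"
  using pair_in_pairs[OF assms(3-5)]
proof
  assume "(a, b) \<in> pairs n"
  then obtain e where "edge_ok G a e b"
    using assms(2) by (auto simp: complete_mgraph_def edge_types_def)
  then show ?thesis
    using assms(5) by (rule d_connected_if_edge_ok)
next
  assume "(b, a) \<in> pairs n"
  then obtain e where "edge_ok G b e a"
    using assms(2) by (auto simp: complete_mgraph_def edge_types_def)
  then have "edge_ok G a (flip_step e) b"
    using assms(1) by (intro edge_ok_flip_step) (simp_all add: mixed_graph_def)
  then show ?thesis
    using assms(5) by (rule d_connected_if_edge_ok)
qed

lemma markov_equiv_if_complete_mgraph: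
  assumes "mixed_graph n G" "complete_mgraph n G" "mixed_graph n H" "complete_mgraph n H"
  shows "markov_equiv n G H"
  using d_connected_if_complete_mgraph[OF assms(1,2)] d_connected_if_complete_mgraph[OF assms(3,4)]
  by (simp add: markov_equiv_def d_separated_def)

lemma expected_MEC_size_ge_equiv_class:
  assumes "finite C" and "S \<subseteq> C" and "\<And>G H. G \<in> S \<Longrightarrow> H \<in> S \<Longrightarrow> markov_equiv n G H"
  shows "real (card S) ^ 2 / real (card C) \<le> expected_MEC_size C n"
proof -
  have "card S \<le> card (MEC C n G)" if "G \<in> S" for G
  proof (rule card_mono)
    show "finite (MEC C n G)"
      using assms(1) by (simp add: MEC_def)
    show "S \<subseteq> MEC C n G"
      unfolding MEC_def using assms(2,3) that by blast
  qed
  then have "real (card S) ^ 2 \<le> (\<Sum>G\<in>S. real (card (MEC C n G)))"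
    using sum_mono[of S "\<lambda>_. real (card S)"] by (simp add: power2_eq_square)
  also have "\<dots> \<le> (\<Sum>G\<in>C. real (card (MEC C n G)))"
    using assms(1,2) by (intro sum_mono2) auto
  finally show ?thesis
    unfolding expected_MEC_size_def by (simp add: divide_right_mono)
qed

lemma expected_MEC_size_ge_power:
  assumes C: "C \<subseteq> Collect (mixed_graph n)"
    and U: "\<And>G p. G \<in> C \<Longrightarrow> p \<in> pairs n \<Longrightarrow> edge_types G p \<in> U"
    and L: "graph_of_edge_types n ` (pairs n \<rightarrow>\<^sub>E L) \<subseteq> C" "{} \<notin> L" "L \<noteq> {}"
  shows "(real (card L) ^ 2 / real (card U)) ^ card (pairs n) \<le> expected_MEC_size C n"
proof -
  let ?S = "graph_of_edge_types n ` (pairs n \<rightarrow>\<^sub>E L)"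
  have card_S: "card ?S = card L ^ card (pairs n)"
    using inj_on_graph_of_edge_types by (simp add: card_image card_PiE)
  have "complete_mgraph n (graph_of_edge_types n s)" if "s \<in> pairs n \<rightarrow>\<^sub>E L" for s
    using that L(2) by (auto simp: complete_mgraph_def edge_types_graph_of_edge_types dest: PiE_mem)
  then have equiv: "markov_equiv n G H" if "G \<in> ?S" "H \<in> ?S" for G H
    using that by (auto intro: markov_equiv_if_complete_mgraph simp: mixed_graph_graph_of_edge_types)
  have fin: "finite C" and card_C: "card C \<le> card U ^ card (pairs n)"
    using card_le_power_card_edge_types[OF C U] by blast+
  have "0 < card ?S"
    using L(3) by (simp add: card_S card_gt_0_iff)
  then have C_pos: "0 < card C"
    using card_mono[OF fin L(1)] by linarith
  then have U_pos: "0 < card U ^ card (pairs n)"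
    using card_C by linarith
  have "(real (card L) ^ 2 / real (card U)) ^ card (pairs n)
      = real (card ?S) ^ 2 / real (card U) ^ card (pairs n)"
    by (simp add: card_S power_divide mult.commute flip: power_mult)
  also have "\<dots> \<le> real (card ?S) ^ 2 / real (card C)"
    using card_C C_pos U_pos by (intro divide_left_mono) (simp_all flip: of_nat_power)
  also have "\<dots> \<le> expected_MEC_size C n"
    using fin L(1) equiv by (rule expected_MEC_size_ge_equiv_class)
  finally show ?thesis .
qed

lemma edge_types_if_is_admg:
  assumes "is_admg n G"
  shows "edge_types G p \<in> Pow (- {Bwd}) \<union> Pow (- {Fwd})"
proof -
  obtain i j where p: "p = (i, j)"
    by fastforce
  have "(i, j) \<notin> fst G \<or> (j, i) \<notin> fst G"
  proof (rule ccontr)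
    assume "\<not> ?thesis"
    then have "(i, i) \<in> (fst G)\<^sup>+"
      by (meson r_into_trancl trancl_into_trancl)
    then show False
      using assms by (simp add: is_admg_def acyclic_def)
  qed
  then show ?thesis
    by (auto simp: edge_types_def p)
qed

lemma is_admg_graph_of_edge_types:
  assumes "s \<in> pairs n \<rightarrow>\<^sub>E Pow (- {Bwd})"
  shows "is_admg n (graph_of_edge_types n s)"
proof -
  have "fst (graph_of_edge_types n s) \<subseteq> {(i, j). i < j}"
    using assms by (auto simp: graph_of_edge_types_def pairs_def dest: PiE_mem)
  then have "acyclic (fst (graph_of_edge_types n s))"
    by (intro wf_acyclic wf_subset[OF wf_less])
  then show ?thesis
    by (simp add: is_admg_iff mixed_graph_graph_of_edge_types)
qed

lemma edge_types_if_is_dcg: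
  assumes "is_dcg n G"
  shows "edge_types G p \<in> Pow (- {Bid})"
  using assms by (auto simp: is_dcg_def edge_types_def)

lemma is_dcg_graph_of_edge_types:
  assumes "s \<in> pairs n \<rightarrow>\<^sub>E Pow (- {Bid})"
  shows "is_dcg n (graph_of_edge_types n s)"
proof -
  have "snd (graph_of_edge_types n s) = {}"
    using assms by (auto simp: graph_of_edge_types_def dest: PiE_mem)
  then show ?thesis
    by (simp add: is_dcg_iff mixed_graph_graph_of_edge_types)
qed

lemma card_Pow_Compl_singleton_minus_empty: "card (Pow (- {e :: step}) - {{}}) = 3"
  by (cases e) (simp_all add: card_Pow Compl_eq_Diff_UNIV UNIV_step)

lemma admg_expected_MEC_size_ge: "(3 / 2) ^ card (pairs n) \<le> expected_MEC_size (admgs n) n"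
proof -
  let ?L = "Pow (- {Bwd}) - {{}}" and ?U = "Pow (- {Bwd}) \<union> Pow (- {Fwd})"
  have "card ?U = 6"
    using card_Un_Int[of "Pow (- {Bwd})" "Pow (- {Fwd})"]
    by (simp add: card_Pow Compl_eq_Diff_UNIV UNIV_step flip: Pow_Int_eq)
  moreover have "(real (card ?L) ^ 2 / real (card ?U)) ^ card (pairs n) \<le> expected_MEC_size (admgs n) n"
  proof (rule expected_MEC_size_ge_power)
    show "admgs n \<subseteq> Collect (mixed_graph n)"
      by (auto simp: admgs_def is_admg_iff)
    show "edge_types G p \<in> ?U" if "G \<in> admgs n" for G p
      using that by (intro edge_types_if_is_admg) (simp add: admgs_def)
    show "graph_of_edge_types n ` (pairs n \<rightarrow>\<^sub>E ?L) \<subseteq> admgs n"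
    proof (rule image_subsetI)
      fix s
      assume "s \<in> pairs n \<rightarrow>\<^sub>E ?L"
      then have "s \<in> pairs n \<rightarrow>\<^sub>E Pow (- {Bwd})"
        by (auto simp: PiE_iff)
      then show "graph_of_edge_types n s \<in> admgs n"
        by (simp add: admgs_def is_admg_graph_of_edge_types)
    qed
  qed auto
  ultimately show ?thesis
    by (simp add: card_Pow_Compl_singleton_minus_empty)
qed

lemma dcg_expected_MEC_size_ge: "(9 / 4) ^ card (pairs n) \<le> expected_MEC_size (dcgs n) n"
proof -
  let ?L = "Pow (- {Bid}) - {{}}" and ?U = "Pow (- {Bid})"
  have "(real (card ?L) ^ 2 / real (card ?U)) ^ card (pairs n) \<le> expected_MEC_size (dcgs n) n"
  proof (rule expected_MEC_size_ge_power)
    show "dcgs n \<subseteq> Collect (mixed_graph n)"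
      by (auto simp: dcgs_def is_dcg_iff)
    show "edge_types G p \<in> ?U" if "G \<in> dcgs n" for G p
      using that by (intro edge_types_if_is_dcg) (simp add: dcgs_def)
    show "graph_of_edge_types n ` (pairs n \<rightarrow>\<^sub>E ?L) \<subseteq> dcgs n"
    proof (rule image_subsetI)
      fix s
      assume "s \<in> pairs n \<rightarrow>\<^sub>E ?L"
      then have "s \<in> pairs n \<rightarrow>\<^sub>E ?U"
        by (auto simp: PiE_iff)
      then show "graph_of_edge_types n s \<in> dcgs n"
        by (simp add: dcgs_def is_dcg_graph_of_edge_types)
    qed
  qed auto
  then show ?thesis
    by (simp add: card_Pow_Compl_singleton_minus_empty card_Pow Compl_eq_Diff_UNIV UNIV_step)
qed

lemma card_pairs: "2 * card (pairs n) = n * (n - 1)"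
proof (induction n)
  case 0
  have "pairs 0 = {}"
    by (auto simp: pairs_def)
  then show ?case by simp
next
  case (Suc n)
  have split: "pairs (Suc n) = pairs n \<union> (\<lambda>i. (i, Suc n)) ` {1..n}"
    by (auto simp: pairs_def)
  have "pairs n \<inter> (\<lambda>i. (i, Suc n)) ` {1..n} = {}"
    by (auto simp: pairs_def)
  then have "card (pairs (Suc n)) = card (pairs n) + n"
    unfolding split by (subst card_Un_disjoint) (auto simp: card_image inj_on_def)
  then show ?case
    using Suc by (cases n) (auto simp: algebra_simps)
qed

lemma card_pairs_ge:
  assumes "2 \<le> n"
  shows "real n ^ 2 / 4 \<le> real (card (pairs n))" and "real n / 2 \<le> real (card (pairs n))"
proof -
  have "2 * real (card (pairs n)) = real n * (real n - 1)"
    using arg_cong[OF card_pairs[of n], of real] assms by (simp add: of_nat_diff)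
  moreover have "2 * real n \<le> real n * real n"
    using assms by (intro mult_right_mono) auto
  ultimately show "real n ^ 2 / 4 \<le> real (card (pairs n))" and "real n / 2 \<le> real (card (pairs n))"
    by (simp_all add: power2_eq_square algebra_simps)
qed

lemma power_card_pairs_growth:
  fixes f :: "nat \<Rightarrow> real"
  assumes b: "1 < b" and f: "\<And>n. b ^ card (pairs n) \<le> f n"
  shows "\<exists>c>0. \<forall>\<^sub>F n in sequentially. f n \<ge> 2 powr (c * real n ^ 2)"
    and "\<exists>c>0. \<forall>\<^sub>F n in sequentially. f n \<ge> 2 powr (c * real n)"
proof -
  have log_pos: "0 < log 2 b"
    using b by simp
  have "2 powr (log 2 b / 4 * real n ^ 2) \<le> f n \<and> 2 powr (log 2 b / 2 * real n) \<le> f n"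
    if "2 \<le> n" for n
  proof -
    have power_eq: "b ^ card (pairs n) = 2 powr (log 2 b * real (card (pairs n)))"
      using b by (simp add: powr_powr [symmetric] powr_realpow)
    have "log 2 b / 4 * real n ^ 2 \<le> log 2 b * real (card (pairs n))"
      and "log 2 b / 2 * real n \<le> log 2 b * real (card (pairs n))"
      using card_pairs_ge[OF that] log_pos mult_left_mono by fastforce+
    then have "2 powr (log 2 b / 4 * real n ^ 2) \<le> b ^ card (pairs n)"
      and "2 powr (log 2 b / 2 * real n) \<le> b ^ card (pairs n)"
      unfolding power_eq by simp_all
    then show ?thesis
      using f[of n] by linarith
  qed
  then have ev: "\<forall>\<^sub>F n in sequentially.
      2 powr (log 2 b / 4 * real n ^ 2) \<le> f n \<and> 2 powr (log 2 b / 2 * real n) \<le> f n"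
    by (rule eventually_sequentiallyI)
  show "\<exists>c>0. \<forall>\<^sub>F n in sequentially. f n \<ge> 2 powr (c * real n ^ 2)"
    using log_pos ev by (intro exI[of _ "log 2 b / 4"] conjI) (auto elim: eventually_mono)
  show "\<exists>c>0. \<forall>\<^sub>F n in sequentially. f n \<ge> 2 powr (c * real n)"
    using log_pos ev by (intro exI[of _ "log 2 b / 2"] conjI) (auto elim: eventually_mono)
qed

theorem theorem2:
  shows "(\<exists>c>0. \<forall>\<^sub>F n in sequentially.
            expected_MEC_size (admgs n) n \<ge> 2 powr (c * real n ^ 2))
       \<and> (\<exists>c>0. \<forall>\<^sub>F n in sequentially.
            expected_MEC_size (dcgs n) n \<ge> 2 powr (c * real n))"
  using power_card_pairs_growth(1)[OF _ admg_expected_MEC_size_ge]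
    power_card_pairs_growth(2)[OF _ dcg_expected_MEC_size_ge]
  by simp

end
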